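(* Let $n$ be a positive integer and let $w_1 \le \dots \le w_m$ be a feasible partition of $n$, with partial sums $R_i = w_1+\dots+w_i$ and $R_0=0$. Then for every $i$ with $1 \le i \le m$, $w_i \le 2R_{i-1}+1$.
   Context: For a positive integer $n$, a weighing partition of $n$ is a multiset of positive integers $\{w_1,\dots,w_k\}$ summing to $n$ such that every integer $\ell$ with $1\le\ell\le n$ equals $\sum_j u_j w_j$ for some $u_j\in\{-1,0,1\}$. Let $m$ be the minimum number of parts of a weighing partition of $n$. A feasible partition of $n$ is a weighing partition with exactly $m$ parts, written $w_1\le\dots\le w_m$. $R_i=w_1+\dots+w_i$, $R_0=0$, so $R_m=n$. *)

theory Defs
  imports Main "HOL-Library.Multiset"
begin

definition weighing_partition :: "nat \<Rightarrow> nat multiset \<Rightarrow> bool" where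
  "weighing_partition n W \<longleftrightarrow>
     (\<forall>w \<in># W. w > 0) \<and> sum_mset W = n \<and>
     (\<forall>l::nat. 1 \<le> l \<and> l \<le> n \<longrightarrow>
        (\<exists>ws u. mset ws = W \<and> (\<forall>j < length ws. u j \<in> {-1, 0, 1::int}) \<and>
                 int l = (\<Sum>j < length ws. u j * int (ws ! j))))"

definition min_parts :: "nat \<Rightarrow> nat" where
  "min_parts n = (LEAST k. \<exists>W. weighing_partition n W \<and> size W = k)"

definition feasible_partition :: "nat \<Rightarrow> nat multiset \<Rightarrow> bool" where
  "feasible_partition n W \<longleftrightarrow> weighing_partition n W \<and> size W = min_parts n"

end

theory Submission
  imports Defs
begin

text \<open>
  Suppose \<open>w\<^sub>i > k = 2 R\<^sub>i\<^sub>-\<^sub>1 + 1\<close>. Weighing \<open>n - k\<close> as \<open>\<Sum> u\<^sub>j w\<^sub>j\<close> and subtracting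
  from \<open>n = \<Sum> w\<^sub>j\<close> writes \<open>k = \<Sum> (1 - u\<^sub>j) w\<^sub>j\<close> with coefficients in \<open>{0, 1, 2}\<close>. A part larger
  than \<open>k\<close> must get coefficient \<open>0\<close>, and by sortedness all parts not exceeding \<open>k\<close> lie among
  \<open>w\<^sub>1, \<dots>, w\<^sub>i\<^sub>-\<^sub>1\<close>; hence \<open>k \<le> 2 R\<^sub>i\<^sub>-\<^sub>1\<close>, a contradiction.
\<close>

lemma sum_list_filter_eq_sum_nth:
  fixes vs :: "'a::comm_monoid_add list"
  shows "sum_list (filter P vs) = (\<Sum>j<length vs. if P (vs ! j) then vs ! j else 0)"
proof -
  have "sum_list (filter P vs) = sum_list (map (\<lambda>x. if P x then x else 0) vs)"
    using sum_list_map_filter'[of "\<lambda>x. x" P vs] by simp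
  then show ?thesis by (simp add: sum_list_sum_nth atLeast0LessThan)
qed

lemma sum_list_take_eq_sum_nth:
  assumes "i \<le> length ws"
  shows "sum_list (take i ws) = (\<Sum>j<i. ws ! j)"
  using assms by (simp add: sum_list_sum_nth atLeast0LessThan min_def)

lemma weighted_sum_le_twice_sum_small_parts:
  fixes vs :: "nat list" and c :: "nat \<Rightarrow> int"
  assumes coeffs: "\<forall>j<length vs. 0 \<le> c j \<and> c j \<le> 2"
    and bound: "(\<Sum>j<length vs. c j * int (vs ! j)) \<le> int k"
  shows "(\<Sum>j<length vs. c j * int (vs ! j)) \<le> 2 * int (sum_list (filter (\<lambda>x. x \<le> k) vs))"
proof -
  let ?S = "\<Sum>j<length vs. c j * int (vs ! j)"
  have termwise: "c j * int (vs ! j) \<le> 2 * int (if vs ! j \<le> k then vs ! j else 0)"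
    if j: "j < length vs" for j
  proof (cases "vs ! j \<le> k")
    case True
    then show ?thesis using coeffs j by (simp add: mult_right_mono)
  next
    case False
    have "c j * int (vs ! j) \<le> ?S"
      using coeffs j by (intro member_le_sum) auto
    then have small: "c j * int (vs ! j) < int (vs ! j)"
      using False bound by linarith
    have "\<not> 1 \<le> c j"
    proof
      assume "1 \<le> c j"
      then have "int (vs ! j) \<le> c j * int (vs ! j)"
        by (simp add: mult_le_cancel_right1)
      then show False using small by linarith
    qed
    moreover have "0 \<le> c j"
      using coeffs j by simp
    ultimately have "c j = 0"
      by linarith
    then show ?thesis by simp
  qed
  have "?S \<le> (\<Sum>j<length vs. 2 * int (if vs ! j \<le> k then vs ! j else 0))"
    using termwise by (intro sum_mono) auto
  also have "\<dots> = 2 * int (\<Sum>j<length vs. if vs ! j \<le> k then vs ! j else 0)"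
    by (simp only: sum_distrib_left of_nat_sum)
  also have "\<dots> = 2 * int (sum_list (filter (\<lambda>x. x \<le> k) vs))"
    by (simp only: sum_list_filter_eq_sum_nth)
  finally show ?thesis .
qed

lemma weighing_partition_le_twice_sum_small_parts:
  assumes W: "weighing_partition n W" and "k < n"
  shows "k \<le> 2 * sum_mset (filter_mset (\<lambda>x. x \<le> k) W)"
proof -
  obtain ws u where ws: "mset ws = W" and u: "\<forall>j<length ws. u j \<in> {-1, 0, 1::int}"
    and weigh: "int (n - k) = (\<Sum>j<length ws. u j * int (ws ! j))"
  proof -
    have "1 \<le> n - k \<and> n - k \<le> n" using \<open>k < n\<close> by simp
    then show ?thesis using W that unfolding weighing_partition_def by blast
  qed
  have "sum_list ws = n"
    using W ws unfolding weighing_partition_def by (metis sum_mset_sum_list)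
  then have "int n = (\<Sum>j<length ws. int (ws ! j))"
    by (simp add: sum_list_sum_nth atLeast0LessThan flip: of_nat_sum)
  then have complement: "(\<Sum>j<length ws. (1 - u j) * int (ws ! j)) = int k"
    using weigh \<open>k < n\<close> by (simp add: algebra_simps sum_subtractf)
  have "int k \<le> 2 * int (sum_list (filter (\<lambda>x. x \<le> k) ws))"
    using weighted_sum_le_twice_sum_small_parts[of ws "\<lambda>j. 1 - u j" k] u complement by force
  moreover have "sum_list (filter (\<lambda>x. x \<le> k) ws) = sum_mset (filter_mset (\<lambda>x. x \<le> k) W)"
    by (metis mset_filter ws sum_mset_sum_list)
  ultimately show ?thesis by linarith
qed

lemma sorted_sum_filter_le_sum_take:
  fixes ws :: "nat list"
  assumes "sorted ws" and "i < length ws" and "k < ws ! i"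
  shows "sum_list (filter (\<lambda>x. x \<le> k) ws) \<le> sum_list (take i ws)"
proof -
  have "\<not> x \<le> k" if "x \<in> set (drop i ws)" for x
  proof -
    obtain p where "p < length (drop i ws)" "x = drop i ws ! p"
      using \<open>x \<in> set (drop i ws)\<close> by (metis in_set_conv_nth)
    then have "i + p < length ws" "x = ws ! (i + p)"
      by auto
    then have "ws ! i \<le> x"
      using \<open>sorted ws\<close> by (simp add: sorted_nth_mono)
    then show ?thesis using \<open>k < ws ! i\<close> by simp
  qed
  then have "filter (\<lambda>x. x \<le> k) (drop i ws) = []"
    by (simp add: filter_empty_conv)
  then have "filter (\<lambda>x. x \<le> k) ws = filter (\<lambda>x. x \<le> k) (take i ws)"
    using filter_append[of "\<lambda>x. x \<le> k" "take i ws" "drop i ws"] by simp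
  then show ?thesis
    using sum_list_filter_le_nat[of "\<lambda>x. x" "\<lambda>x. x \<le> k" "take i ws"] by simp
qed

theorem theorem2:
  fixes n :: nat and ws :: "nat list"
  assumes "n > 0"
    and "sorted ws"
    and "feasible_partition n (mset ws)"
  shows "\<forall>i. 1 \<le> i \<and> i \<le> length ws \<longrightarrow>
           ws ! (i - 1) \<le> 2 * (\<Sum>j < i - 1. ws ! j) + 1"
proof (intro allI impI)
  fix i assume i: "1 \<le> i \<and> i \<le> length ws"
  then have idx: "i - 1 < length ws" by linarith
  define R where "R = sum_list (take (i - 1) ws)"
  have R: "R = (\<Sum>j < i - 1. ws ! j)"
    unfolding R_def using idx by (intro sum_list_take_eq_sum_nth) simp
  show "ws ! (i - 1) \<le> 2 * (\<Sum>j < i - 1. ws ! j) + 1"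
  proof (rule ccontr)
    assume "\<not> ?thesis"
    then have big: "2 * R + 1 < ws ! (i - 1)" by (simp add: R)
    have W: "weighing_partition n (mset ws)"
      using assms(3) unfolding feasible_partition_def by simp
    have "sum_list ws = n"
      using W unfolding weighing_partition_def by (simp add: sum_mset_sum_list)
    moreover have "ws ! (i - 1) \<in> set ws"
      using idx by (rule nth_mem)
    ultimately have "ws ! (i - 1) \<le> n"
      using member_le_sum_list by blast
    then have "2 * R + 1 \<le> 2 * sum_list (filter (\<lambda>x. x \<le> 2 * R + 1) ws)"
      using weighing_partition_le_twice_sum_small_parts[OF W, of "2 * R + 1"] big
      by (simp add: sum_mset_sum_list flip: mset_filter)
    also have "\<dots> \<le> 2 * R"
      using sorted_sum_filter_le_sum_take[OF \<open>sorted ws\<close> idx big] unfolding R_def by simp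
    finally show False by simp
  qed
qed

end
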